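(* Assume $\sup_n\|D_n\|<\infty$. Let $z=x+iy$ with $x\in\mathbb{R}$, $y>0$, let $(F_n(z))_{n\ge0}$ be the Jost solution at $z$, and let $\phi_n=\phi_n(x)$, $\psi_n=\psi_n(x)$ be the Dirichlet and Neumann solutions at the real energy $x$. Then for every $n\ge1$, $$F_n(z)=\psi_n-\phi_nM^\phi_+(z)D_0-iy\,\psi_n\sum_{k=1}^nD_0^{-1}\phi_k^{t}F_k(z)+iy\,\phi_n\sum_{k=1}^nD_0^{-1}\psi_k^{t}F_k(z),$$ and $F_0(z)=\mathbb{I}$.
   Context: Fix $l\in\mathbb{N}$. Let $(D_n)_{n\in\mathbb{Z}}$, $(V_n)_{n\in\mathbb{Z}}$ be sequences of real symmetric $l\times l$ matrices with every $D_n$ invertible. For $z\in\mathbb{C}$ the eigenvalue equation is $D_{n-1}\mathbf{u}_{n-1}+D_n\mathbf{u}_{n+1}+V_n\mathbf{u}_n=z\mathbf{u}_n$; a sequence of $l\times l$ matrices is a (matrix) solution if each column is a solution. The Dirichlet solution $\phi(z)$ and Neumann solution $\psi(z)$ are the matrix solutions for $n\ge1$ with $\phi_0=0,\ \phi_1=\mathbb{I}$ and $\psi_0=\mathbb{I},\ \psi_1=0$. Jost solution and Weyl function: when $\sup_n\|D_n\|<\infty$, for each $z\in\mathbb{C}\setminus\mathbb{R}$ there is a unique sequence $(F_n(z))_{n\ge0}$ of $l\times l$ matrices with $D_nF_{n+1}+D_{n-1}F_{n-1}+V_nF_n=zF_n$ for all $n\ge1$, $F_0=\mathbb{I}$, and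 $\sum_{n\ge0}\|F_n(z)\|^2<\infty$; the matrix Weyl–Titchmarsh function is $M^\phi_+(z):=-F_1(z)D_0^{-1}$. $A^t$ denotes the transpose. *)

theory Defs
  imports "HOL-Analysis.Analysis"
begin

definition cmat :: "real^'l^'l \<Rightarrow> complex^'l^'l" where
  "cmat A = (\<chi> i j. complex_of_real (A $ i $ j))"

text \<open>Matrix solutions for n \<ge> 1 of
  D_(n-1) u_(n-1) + D_n u_(n+1) + V_n u_n = z u_n, with prescribed values at 0 and 1,
  obtained by solving for u_(n+1) (D_n invertible).\<close>
fun mat_sol :: "(int \<Rightarrow> real^'l^'l) \<Rightarrow> (int \<Rightarrow> real^'l^'l) \<Rightarrow> complex
    \<Rightarrow> complex^'l^'l \<Rightarrow> complex^'l^'l \<Rightarrow> nat \<Rightarrow> complex^'l^'l" where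
  "mat_sol D V z a b 0 = a"
| "mat_sol D V z a b (Suc 0) = b"
| "mat_sol D V z a b (Suc (Suc n)) =
     matrix_inv (cmat (D (int n + 1))) **
       (mat z ** mat_sol D V z a b (Suc n)
        - cmat (V (int n + 1)) ** mat_sol D V z a b (Suc n)
        - cmat (D (int n)) ** mat_sol D V z a b n)"

definition dirichlet_sol where "dirichlet_sol D V z = mat_sol D V z 0 (mat 1)"
definition neumann_sol where "neumann_sol D V z = mat_sol D V z (mat 1) 0"

definition is_jost_solution ::
  "(int \<Rightarrow> real^'l^'l) \<Rightarrow> (int \<Rightarrow> real^'l^'l) \<Rightarrow> complex \<Rightarrow> (nat \<Rightarrow> complex^'l^'l) \<Rightarrow> bool" where
  "is_jost_solution D V z F \<longleftrightarrow>
     (\<forall>n\<ge>1. cmat (D (int n)) ** F (n + 1) + cmat (D (int n - 1)) ** F (n - 1)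
             + cmat (V (int n)) ** F n = mat z ** F n)
   \<and> F 0 = mat 1
   \<and> summable (\<lambda>n. (norm (F n))^2)"

definition weyl_M :: "(int \<Rightarrow> real^'l^'l) \<Rightarrow> (nat \<Rightarrow> complex^'l^'l) \<Rightarrow> complex^'l^'l" where
  "weyl_M D F = - (F 1 ** matrix_inv (cmat (D 0)))"

end

theory Submission
  imports Defs
begin

(* Variation of constants. Since Complex x y = x + iy, the Jost solution solves the real-energy
   equation (J - x) u = 0 up to the perturbation iy F. Writing F_n = psi_n A_n + phi_n B_n with
   coefficients A_n, B_n that are updated by the Green kernel
   G(a,b) = psi_a D_0^-1 phi_b^t - phi_a D_0^-1 psi_b^t, the identity reduces to the Wronskian
   relations G(n,n) = 0 and G(n,n+1) = D_n^-1, which follow from the symmetry of D_n and V_n. *)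

lemma matrix_add_rdistrib: "((A::'a::semiring_1^'n^'m) + B) ** C = A ** C + B ** C"
  by (simp add: matrix_matrix_mult_def vec_eq_iff distrib_right sum.distrib)

lemma matrix_diff_ldistrib: "(A::'a::ring_1^'n^'m) ** (B - C) = A ** B - A ** C"
  by (simp add: matrix_matrix_mult_def vec_eq_iff right_diff_distrib sum_subtractf)

lemma matrix_diff_rdistrib: "((A::'a::ring_1^'n^'m) - B) ** C = A ** C - B ** C"
  by (simp add: matrix_matrix_mult_def vec_eq_iff left_diff_distrib sum_subtractf)

lemma matrix_minus_left: "(- (A::'a::ring_1^'n^'m)) ** B = - (A ** B)"
  by (simp add: matrix_matrix_mult_def vec_eq_iff sum_negf)

lemma matrix_minus_right: "(A::'a::ring_1^'n^'m) ** (- B) = - (A ** B)"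
  by (simp add: matrix_matrix_mult_def vec_eq_iff sum_negf)

lemmas matrix_ring_simps = matrix_add_ldistrib matrix_add_rdistrib matrix_diff_ldistrib
  matrix_diff_rdistrib matrix_minus_left matrix_minus_right matrix_mul_assoc[symmetric]

lemma mat_matrix_mult_commute: "mat c ** (A::'a::comm_semiring_1^'n^'n) = A ** mat c"
  unfolding matrix_matrix_mult_def mat_def
  by (simp add: vec_eq_iff if_distrib if_distribR mult.commute cong: if_cong)

lemma mat_add: "mat (a + b) = mat a + (mat b :: 'a::monoid_add^'n^'n)"
  by (simp add: mat_def vec_eq_iff)

lemma transpose_diff: "transpose ((A::'a::ab_group_add^'n^'m) - B) = transpose A - transpose B"
  by (vector transpose_def)

lemma transpose_zero [simp]: "transpose 0 = 0"
  by (simp add: transpose_def vec_eq_iff)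

lemma matrix_inv_right_left:
  assumes "invertible (A::'a::semiring_1^'n^'m)"
  shows "A ** matrix_inv A = mat 1 \<and> matrix_inv A ** A = mat 1"
proof -
  have "\<exists>A'. A ** A' = mat 1 \<and> A' ** A = mat 1" using assms invertible_def by blast
  then show ?thesis unfolding matrix_inv_def by (rule someI_ex)
qed

lemma transpose_inverse_of_symmetric:
  fixes A B :: "'a::comm_ring_1^'n^'n"
  assumes "transpose A = A" "A ** B = mat 1" "B ** A = mat 1"
  shows "transpose B = B"
proof -
  have BA: "transpose B ** A = mat 1"
    by (metis assms(1,2) matrix_transpose_mul transpose_mat)
  have "transpose B = transpose B ** (A ** B)" using assms(2) by simp
  also have "\<dots> = B" by (simp add: matrix_mul_assoc BA)
  finally show ?thesis .
qed

lemma cmat_mult: "cmat (A ** B) = cmat A ** cmat B"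
  by (simp add: cmat_def matrix_matrix_mult_def vec_eq_iff)

lemma cmat_mat_1: "cmat (mat 1) = mat 1"
  by (simp add: cmat_def mat_def vec_eq_iff)

lemma transpose_cmat: "transpose (cmat A) = cmat (transpose A)"
  by (vector transpose_def cmat_def)

lemma invertible_cmat: "invertible A \<Longrightarrow> invertible (cmat A)"
  unfolding invertible_def by (metis cmat_mult cmat_mat_1)

(* The scalar matrix mat c commutes with everything; hiding it behind a constant lets the
   simplifier pull it out of products without looping. *)
definition scalar_mult :: "'a::comm_ring_1 \<Rightarrow> 'a^'n^'n \<Rightarrow> 'a^'n^'n" where
  "scalar_mult c M = mat c ** M"

lemma scalar_mult_simps:
  fixes A B :: "'a::comm_ring_1^'n^'n"
  shows "A ** scalar_mult c B = scalar_mult c (A ** B)"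
    and "scalar_mult c A ** B = scalar_mult c (A ** B)"
    and "scalar_mult c (A + B) = scalar_mult c A + scalar_mult c B"
    and "scalar_mult c (A - B) = scalar_mult c A - scalar_mult c B"
    and "scalar_mult c (- A) = - scalar_mult c A"
  unfolding scalar_mult_def
  by (simp_all add: matrix_ring_simps mat_matrix_mult_commute)

locale block_jacobi =
  fixes D V :: "int \<Rightarrow> real^'l^'l"
  assumes D_sym: "\<And>n. transpose (D n) = D n"
    and V_sym: "\<And>n. transpose (V n) = V n"
    and D_invertible: "\<And>n. invertible (D n)"
begin

abbreviation d :: "nat \<Rightarrow> complex^'l^'l" where "d n \<equiv> cmat (D (int n))"
abbreviation v :: "nat \<Rightarrow> complex^'l^'l" where "v n \<equiv> cmat (V (int n))"
abbreviation d_inv :: "nat \<Rightarrow> complex^'l^'l" where "d_inv n \<equiv> matrix_inv (d n)"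

lemma d_inv_right: "cmat (D k) ** (matrix_inv (cmat (D k)) ** A) = A"
  and d_inv_left: "matrix_inv (cmat (D k)) ** (cmat (D k) ** A) = A"
  using matrix_inv_right_left[OF invertible_cmat[OF D_invertible]]
  by (simp_all add: matrix_mul_assoc)

lemma d_sym: "transpose (cmat (D k)) = cmat (D k)"
  and v_sym: "transpose (cmat (V k)) = cmat (V k)"
  by (simp_all add: transpose_cmat D_sym V_sym)

lemma d_inv_sym: "transpose (matrix_inv (cmat (D k))) = matrix_inv (cmat (D k))"
  using transpose_inverse_of_symmetric[OF d_sym]
    matrix_inv_right_left[OF invertible_cmat[OF D_invertible]] by blast

definition solves :: "complex \<Rightarrow> (nat \<Rightarrow> complex^'l^'l) \<Rightarrow> bool" where
  "solves z u \<longleftrightarrow> (\<forall>n. d (Suc n) ** u (Suc (Suc n)) + d n ** u n + v (Suc n) ** u (Suc n)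
                         = mat z ** u (Suc n))"

lemma solves_iff_recursion:
  "solves z u \<longleftrightarrow>
     (\<forall>n. u (Suc (Suc n)) = d_inv (Suc n) ** (mat z ** u (Suc n) - v (Suc n) ** u (Suc n) - d n ** u n))"
proof -
  have "d (Suc n) ** u (Suc (Suc n)) + d n ** u n + v (Suc n) ** u (Suc n) = mat z ** u (Suc n)
     \<longleftrightarrow> d (Suc n) ** u (Suc (Suc n)) = mat z ** u (Suc n) - v (Suc n) ** u (Suc n) - d n ** u n"
    for n by (auto simp: algebra_simps)
  also have "\<dots> n \<longleftrightarrow> u (Suc (Suc n)) =
      d_inv (Suc n) ** (mat z ** u (Suc n) - v (Suc n) ** u (Suc n) - d n ** u n)" for n
    by (metis d_inv_left d_inv_right)
  finally show ?thesis unfolding solves_def by blast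
qed

lemma solves_mat_sol: "solves z (mat_sol D V z a b)"
  by (simp add: solves_iff_recursion add.commute)

lemma solves_transpose_recursion:
  assumes "solves z u"
  shows "transpose (u (Suc (Suc n))) =
    (transpose (u (Suc n)) ** mat z - transpose (u (Suc n)) ** v (Suc n) - transpose (u n) ** d n)
      ** d_inv (Suc n)"
  using assms unfolding solves_iff_recursion
  by (simp add: matrix_transpose_mul transpose_diff d_inv_sym v_sym d_sym)

lemma solves_combination:
  assumes "solves z u" "solves z w"
  shows "u (Suc (Suc n)) ** A + w (Suc (Suc n)) ** B = d_inv (Suc n) **
     (mat z ** (u (Suc n) ** A + w (Suc n) ** B) - v (Suc n) ** (u (Suc n) ** A + w (Suc n) ** B)
      - d n ** (u n ** A + w n ** B))"
proof -
  have "u (Suc (Suc n)) = d_inv (Suc n) ** (mat z ** u (Suc n) - v (Suc n) ** u (Suc n) - d n ** u n)"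
    and "w (Suc (Suc n)) = d_inv (Suc n) ** (mat z ** w (Suc n) - v (Suc n) ** w (Suc n) - d n ** w n)"
    using assms unfolding solves_iff_recursion by blast+
  then show ?thesis by (simp only: matrix_ring_simps) (simp add: algebra_simps)
qed

definition green :: "complex \<Rightarrow> nat \<Rightarrow> nat \<Rightarrow> complex^'l^'l" where
  "green z a b = neumann_sol D V z a ** (d_inv 0 ** transpose (dirichlet_sol D V z b))
               - dirichlet_sol D V z a ** (d_inv 0 ** transpose (neumann_sol D V z b))"

lemma green_transpose: "transpose (green z a b) = - green z b a"
  by (simp add: green_def transpose_diff matrix_transpose_mul d_inv_sym matrix_ring_simps)

lemma green_recursion_left:
  "green z (Suc (Suc n)) b = d_inv (Suc n) **
     (mat z ** green z (Suc n) b - v (Suc n) ** green z (Suc n) b - d n ** green z n b)"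
proof -
  have "green z a b = neumann_sol D V z a ** (d_inv 0 ** transpose (dirichlet_sol D V z b))
      + dirichlet_sol D V z a ** (- (d_inv 0 ** transpose (neumann_sol D V z b)))" for a
    by (simp add: green_def matrix_minus_right)
  then show ?thesis
    by (simp only:) (rule solves_combination;
        simp add: dirichlet_sol_def neumann_sol_def solves_mat_sol)
qed

lemma green_recursion_right:
  "green z a (Suc (Suc n)) =
     (green z a (Suc n) ** mat z - green z a (Suc n) ** v (Suc n) - green z a n ** d n) ** d_inv (Suc n)"
  unfolding green_def dirichlet_sol_def neumann_sol_def
    solves_transpose_recursion[OF solves_mat_sol]
  by (simp add: matrix_ring_simps algebra_simps)

lemma green_diagonal_superdiagonal:
  "green z n n = 0 \<and> green z n (Suc n) = d_inv n \<and> green z (Suc n) (Suc n) = 0"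
proof (induction n)
  case 0
  show ?case by (simp add: green_def dirichlet_sol_def neumann_sol_def)
next
  case (Suc n)
  have subdiag: "green z (Suc n) n = - d_inv n"
    using green_transpose[of z n "Suc n"] Suc d_inv_sym by (metis minus_equation_iff)
  have superdiag: "green z (Suc n) (Suc (Suc n)) = d_inv (Suc n)"
    unfolding green_recursion_right using Suc subdiag by (simp add: matrix_ring_simps d_inv_left)
  have "green z n (Suc (Suc n)) = (d_inv n ** mat z - d_inv n ** v (Suc n)) ** d_inv (Suc n)"
    unfolding green_recursion_right using Suc by simp
  then have "green z (Suc (Suc n)) (Suc (Suc n)) = 0"
    unfolding green_recursion_left superdiag by (simp add: matrix_ring_simps d_inv_right)
  with Suc superdiag show ?case by simp
qed

lemma green_diagonal: "green z n n = 0"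
  and green_superdiagonal: "green z n (Suc n) = d_inv n"
  using green_diagonal_superdiagonal by auto

definition variation_ansatz ::
    "complex \<Rightarrow> complex \<Rightarrow> (nat \<Rightarrow> complex^'l^'l) \<Rightarrow> nat \<Rightarrow> nat \<Rightarrow> complex^'l^'l" where
  "variation_ansatz w c u m n =
     neumann_sol D V w m **
       (u 0 - mat c ** (\<Sum>k=1..n. d_inv 0 ** transpose (dirichlet_sol D V w k) ** u k))
   + dirichlet_sol D V w m **
       (u 1 + mat c ** (\<Sum>k=1..n. d_inv 0 ** transpose (neumann_sol D V w k) ** u k))"

lemma variation_ansatz_Suc_right:
  "variation_ansatz w c u m (Suc n) =
     variation_ansatz w c u m n - mat c ** (green w m (Suc n) ** u (Suc n))"
  unfolding variation_ansatz_def green_def scalar_mult_def[symmetric]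
  by (simp add: matrix_ring_simps scalar_mult_simps algebra_simps)

lemma variation_ansatz_recursion_left:
  "variation_ansatz w c u (Suc (Suc n)) m = d_inv (Suc n) **
     (mat w ** variation_ansatz w c u (Suc n) m - v (Suc n) ** variation_ansatz w c u (Suc n) m
      - d n ** variation_ansatz w c u n m)"
  unfolding variation_ansatz_def
  by (rule solves_combination) (simp_all add: dirichlet_sol_def neumann_sol_def solves_mat_sol)

lemma variation_ansatz_diagonal:
  assumes "solves (w + c) u"
  shows "variation_ansatz w c u n n = u n"
proof -
  have u_rec: "u (Suc (Suc n)) = d_inv (Suc n) **
      (mat w ** u (Suc n) + mat c ** u (Suc n) - v (Suc n) ** u (Suc n) - d n ** u n)" for n
    using assms by (simp add: solves_iff_recursion mat_add matrix_add_rdistrib)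
  have "variation_ansatz w c u n n = u n \<and> variation_ansatz w c u (Suc n) (Suc n) = u (Suc n)"
  proof (induction n)
    case 0
    show ?case
      by (simp add: variation_ansatz_def dirichlet_sol_def neumann_sol_def)
  next
    case (Suc n)
    then have off_diagonal: "variation_ansatz w c u n (Suc n) = u n - mat c ** (d_inv n ** u (Suc n))"
      by (simp add: variation_ansatz_Suc_right green_superdiagonal)
    have "variation_ansatz w c u (Suc (Suc n)) (Suc (Suc n)) = variation_ansatz w c u (Suc (Suc n)) (Suc n)"
      by (simp add: variation_ansatz_Suc_right green_diagonal)
    also have "\<dots> = d_inv (Suc n) **
        (mat w ** u (Suc n) - v (Suc n) ** u (Suc n) - d n ** (u n - mat c ** (d_inv n ** u (Suc n))))"
      using Suc off_diagonal by (simp only: variation_ansatz_recursion_left)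
    also have "\<dots> = u (Suc (Suc n))"
      unfolding u_rec scalar_mult_def[symmetric]
      by (simp add: matrix_ring_simps scalar_mult_simps d_inv_right algebra_simps)
    finally show ?case using Suc by simp
  qed
  then show ?thesis by simp
qed

theorem variation_of_constants:
  assumes "solves (w + c) u"
  shows "u n = neumann_sol D V w n ** u 0 + dirichlet_sol D V w n ** u 1
    - mat c ** neumann_sol D V w n ** (\<Sum>k=1..n. d_inv 0 ** transpose (dirichlet_sol D V w k) ** u k)
    + mat c ** dirichlet_sol D V w n ** (\<Sum>k=1..n. d_inv 0 ** transpose (neumann_sol D V w k) ** u k)"
proof -
  have scalar_inside: "A ** (mat c ** B) = mat c ** A ** B" for A B :: "complex^'l^'l"
    by (metis mat_matrix_mult_commute matrix_mul_assoc)
  have "u n = neumann_sol D V w n ** u 0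
    - mat c ** neumann_sol D V w n ** (\<Sum>k=1..n. d_inv 0 ** transpose (dirichlet_sol D V w k) ** u k)
    + (dirichlet_sol D V w n ** u 1
    + mat c ** dirichlet_sol D V w n ** (\<Sum>k=1..n. d_inv 0 ** transpose (neumann_sol D V w k) ** u k))"
    using variation_ansatz_diagonal[OF assms, of n]
    unfolding variation_ansatz_def matrix_diff_ldistrib matrix_add_ldistrib scalar_inside by simp
  then show ?thesis by (simp add: algebra_simps)
qed

lemma jost_solves:
  assumes "is_jost_solution D V z F"
  shows "solves z F"
  unfolding solves_def
proof
  fix n
  have "\<forall>n\<ge>1. cmat (D (int n)) ** F (n + 1) + cmat (D (int n - 1)) ** F (n - 1)
      + cmat (V (int n)) ** F n = mat z ** F n"
    using assms unfolding is_jost_solution_def by (rule conjunct1)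
  from this[rule_format, of "Suc n"]
  show "d (Suc n) ** F (Suc (Suc n)) + d n ** F n + v (Suc n) ** F (Suc n) = mat z ** F (Suc n)"
    by simp
qed

end

theorem mainTheorem4:
  fixes D V :: "int \<Rightarrow> real^'l^'l" and x y :: real and F :: "nat \<Rightarrow> complex^'l^'l"
  assumes symD: "\<And>n. transpose (D n) = D n"
    and symV: "\<And>n. transpose (V n) = V n"
    and invD: "\<And>n. invertible (D n)"
    and bdd: "\<exists>C. \<forall>n. norm (D n) \<le> C"
    and y: "y > 0"
    and jost: "is_jost_solution D V (Complex x y) F"
  shows "(\<forall>n\<ge>1. F n =
            neumann_sol D V (complex_of_real x) n
            - dirichlet_sol D V (complex_of_real x) n ** weyl_M D F ** cmat (D 0)
            - mat (\<i> * complex_of_real y) ** neumann_sol D V (complex_of_real x) n **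
                (\<Sum>k=1..n. matrix_inv (cmat (D 0)) ** transpose (dirichlet_sol D V (complex_of_real x) k) ** F k)
            + mat (\<i> * complex_of_real y) ** dirichlet_sol D V (complex_of_real x) n **
                (\<Sum>k=1..n. matrix_inv (cmat (D 0)) ** transpose (neumann_sol D V (complex_of_real x) k) ** F k))
         \<and> F 0 = mat 1"
proof -
  interpret block_jacobi D V
    using symD symV invD by unfold_locales
  have F0: "F 0 = mat 1" using jost by (simp add: is_jost_solution_def)
  have "Complex x y = complex_of_real x + \<i> * complex_of_real y" by (simp add: complex_eq_iff)
  then have "solves (complex_of_real x + \<i> * complex_of_real y) F"
    using jost_solves[OF jost] by simp
  note variation = variation_of_constants[OF this]
  have weyl: "weyl_M D F ** cmat (D 0) = - F 1"
    using matrix_inv_right_left[OF invertible_cmat[OF invD]]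
    by (simp add: weyl_M_def matrix_ring_simps)
  show ?thesis
    by (intro conjI allI impI F0, subst variation)
       (simp add: F0 weyl matrix_mul_assoc[symmetric] matrix_minus_right)
qed

end
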